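(* Assume $f$ is Lipschitz and satisfies $\mathbf{(AP)_b}$ with $\lambda_1<b<B$. For every $z\in Z$, the map $t\mapsto u(z,t)=\Psi^{-1}(z+t\phi_1)$ is Lipschitz from $\mathbb{R}$ to $X$, with Lipschitz constant independent of $z$. The height $\tilde h(z,t)$ is Lipschitz in both $z$ and $t$. For every $g=z_g+t_g\phi_1\in Y$ ($z_g\in Z$, $t_g\in\mathbb{R}$), the equation $F(u)=g$, $u\in X$, has as many solutions as the equation $\tilde h(z_g,t)=t_g$ for the unknown $t\in\mathbb{R}$.
   Context: Let $\Omega\subset\mathbb{R}^n$ be a bounded domain with $C^{1,1}$ boundary. Let $Lu=\mathrm{tr}(A(x)D^2u)+b(x)\cdot\nabla u+c(x)u$, where $A\in C(\overline\Omega)$ is symmetric-matrix valued with eigenvalues in $[\lambda,\Lambda]$, $\Lambda\ge\lambda>0$, and $|b|,|c|\le\Lambda$. Fix $p\ge n$, $X=\{u\in W^{2,p}(\Omega):u=0\text{ on }\partial\Omega\}$, $Y=L^p(\Omega)$. $\lambda_1=\sup\{\mu:\exists\,\phi\in W^{2,n}_{\rm loc}(\Omega),\phi>0,(L+\mu)\phi\le0\}$ is the principal (simple) Dirichlet eigenvalue of $-L$ with eigenfunction $\phi_1\in X$, $\phi_1>0$; the adjoint $L^*$ has the same principal eigenvalue with positive eigenfunction $\phi_1^*$; $\langle g,h\rangle=\int_\Omega gh$. $Z=\{g\in Y:\langle g,\phi_1^*\rangle=0\}$, $W=Z\cap X$; $P:Y=Z\oplus\mathbb{R}\phi_1\to Z$,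 $P(z+s\phi_1)=z$. $F(u)=-Lu-f(u)$. Condition $\mathbf{(AP)_b}$ (lower slope normalized to $a=0$, so $0<\lambda_1<b$): $0\le\frac{f(x)-f(y)}{x-y}\le b$ for $x\ne y$, and for some $M\ge0$, $f(s)\ge\max\{bs-M,-M\}$ for all $s$. $B=B(L,\Omega)>\lambda_1$ is a constant (depending only on $L,\Omega$) for which, whenever $\lambda_1<b<B$, there is $c>0$ with $\|\Psi(u)-\Psi(\tilde u)\|_Y\ge c\|u-\tilde u\|_X$ for all $u,\tilde u\in X$, and the map $\Psi:X\to Y$, $\Psi(w+t\phi_1)=P F(w+t\phi_1)+t\phi_1$ ($w\in W$, $t\in\mathbb{R}$), is a bi-Lipschitz homeomorphism. The height function is $\tilde h(z,t)=\langle F(\Psi^{-1}(z+t\phi_1)),\phi_1^*\rangle/\langle\phi_1,\phi_1^*\rangle$, so that $F(u(z,t))=z+\tilde h(z,t)\phi_1$. *)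

theory Defs
  imports "HOL-Analysis.Analysis"
begin

text \<open>The function gamma is written as a function
  on the whole space that does not depend on the k-th coordinate.\<close>

definition C11_fun :: "(real^'n \<Rightarrow> real) \<Rightarrow> bool" where
  "C11_fun \<gamma> \<longleftrightarrow> (\<exists>D. (\<forall>y. (\<gamma> has_derivative D y) (at y)) \<and>
      (\<exists>K. \<forall>y y'. onorm (\<lambda>v. D y v - D y' v) \<le> K * norm (y - y')))"

definition C11_domain :: "(real^'n) set \<Rightarrow> bool" where
  "C11_domain \<Omega> \<longleftrightarrow> open \<Omega> \<and> connected \<Omega> \<and> bounded \<Omega> \<and> \<Omega> \<noteq> {} \<and>
     (\<forall>x0\<in>frontier \<Omega>. \<exists>r>0. \<exists>Q::real^'n^'n. \<exists>k. \<exists>\<gamma>.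
        orthogonal_matrix Q \<and> C11_fun \<gamma> \<and>
        (\<forall>y s. \<gamma> (\<chi> i. if i = k then s else y $ i) = \<gamma> y) \<and>
        \<Omega> \<inter> ball x0 r = {x \<in> ball x0 r. (Q *v x) $ k > \<gamma> (Q *v x)})"

definition Lp_int :: "(real^'n) set \<Rightarrow> real \<Rightarrow> (real^'n \<Rightarrow> real) \<Rightarrow> ennreal" where
  "Lp_int \<Omega> p g = (\<integral>\<^sup>+ x. ennreal (indicator \<Omega> x * \<bar>g x\<bar> powr p) \<partial>lebesgue)"

definition Lp :: "(real^'n) set \<Rightarrow> real \<Rightarrow> (real^'n \<Rightarrow> real) set" where
  "Lp \<Omega> p = {g. g \<in> borel_measurable (lebesgue_on \<Omega>) \<and> Lp_int \<Omega> p g < \<infinity>}"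

definition Lpnorm :: "(real^'n) set \<Rightarrow> real \<Rightarrow> (real^'n \<Rightarrow> real) \<Rightarrow> real" where
  "Lpnorm \<Omega> p g = enn2real (Lp_int \<Omega> p g) powr (1 / p)"

definition ip :: "(real^'n) set \<Rightarrow> (real^'n \<Rightarrow> real) \<Rightarrow> (real^'n \<Rightarrow> real) \<Rightarrow> real" where
  "ip \<Omega> g h = (LINT x:\<Omega>|lebesgue. g x * h x)"

definition pd :: "'n \<Rightarrow> (real^'n \<Rightarrow> real) \<Rightarrow> real^'n \<Rightarrow> real" where
  "pd i \<phi> x = deriv (\<lambda>t. \<phi> (x + t *\<^sub>R axis i 1)) 0"

fun iter_pd :: "'n list \<Rightarrow> (real^'n \<Rightarrow> real) \<Rightarrow> real^'n \<Rightarrow> real" where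
  "iter_pd [] \<phi> = \<phi>"
| "iter_pd (i # is) \<phi> = pd i (iter_pd is \<phi>)"

definition smooth_fun :: "(real^'n \<Rightarrow> real) \<Rightarrow> bool" where
  "smooth_fun \<phi> \<longleftrightarrow> (\<forall>is. iter_pd is \<phi> differentiable_on UNIV)"

definition test_fun :: "(real^'n) set \<Rightarrow> (real^'n \<Rightarrow> real) \<Rightarrow> bool" where
  "test_fun \<Omega> \<phi> \<longleftrightarrow> smooth_fun \<phi> \<and> (\<exists>K. compact K \<and> K \<subseteq> \<Omega> \<and> (\<forall>x. x \<notin> K \<longrightarrow> \<phi> x = 0))"

definition loc_int :: "(real^'n) set \<Rightarrow> (real^'n \<Rightarrow> real) \<Rightarrow> bool" where
  "loc_int \<Omega> u \<longleftrightarrow> (\<forall>K. compact K \<and> K \<subseteq> \<Omega> \<longrightarrow> set_integrable lebesgue K u)"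

definition weak_pd :: "(real^'n) set \<Rightarrow> (real^'n \<Rightarrow> real) \<Rightarrow> 'n \<Rightarrow> (real^'n \<Rightarrow> real) \<Rightarrow> bool" where
  "weak_pd \<Omega> u i v \<longleftrightarrow> loc_int \<Omega> u \<and> loc_int \<Omega> v \<and>
     (\<forall>\<phi>. test_fun \<Omega> \<phi> \<longrightarrow> ip \<Omega> u (pd i \<phi>) = - ip \<Omega> v \<phi>)"

definition weak_pd2 :: "(real^'n) set \<Rightarrow> (real^'n \<Rightarrow> real) \<Rightarrow> 'n \<Rightarrow> 'n \<Rightarrow> (real^'n \<Rightarrow> real) \<Rightarrow> bool" where
  "weak_pd2 \<Omega> u i j w \<longleftrightarrow> loc_int \<Omega> u \<and> loc_int \<Omega> w \<and>
     (\<forall>\<phi>. test_fun \<Omega> \<phi> \<longrightarrow> ip \<Omega> u (pd i (pd j \<phi>)) = ip \<Omega> w \<phi>)"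

definition wd1 :: "(real^'n) set \<Rightarrow> (real^'n \<Rightarrow> real) \<Rightarrow> 'n \<Rightarrow> real^'n \<Rightarrow> real" where
  "wd1 \<Omega> u i = (SOME v. weak_pd \<Omega> u i v)"

definition wd2 :: "(real^'n) set \<Rightarrow> (real^'n \<Rightarrow> real) \<Rightarrow> 'n \<Rightarrow> 'n \<Rightarrow> real^'n \<Rightarrow> real" where
  "wd2 \<Omega> u i j = (SOME w. weak_pd2 \<Omega> u i j w)"

definition W2p :: "(real^'n) set \<Rightarrow> real \<Rightarrow> (real^'n \<Rightarrow> real) set" where
  "W2p \<Omega> p = {u. u \<in> Lp \<Omega> p \<and>
      (\<forall>i. \<exists>v. weak_pd \<Omega> u i v \<and> v \<in> Lp \<Omega> p) \<and>
      (\<forall>i j. \<exists>w. weak_pd2 \<Omega> u i j w \<and> w \<in> Lp \<Omega> p)}"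

definition W2p_loc :: "(real^'n) set \<Rightarrow> real \<Rightarrow> (real^'n \<Rightarrow> real) set" where
  "W2p_loc \<Omega> p = {u. loc_int \<Omega> u \<and>
      (\<forall>i. \<exists>v. weak_pd \<Omega> u i v) \<and> (\<forall>i j. \<exists>w. weak_pd2 \<Omega> u i j w) \<and>
      (\<forall>K. compact K \<and> K \<subseteq> \<Omega> \<longrightarrow>
          u \<in> Lp K p \<and> (\<forall>i. wd1 \<Omega> u i \<in> Lp K p) \<and> (\<forall>i j. wd2 \<Omega> u i j \<in> Lp K p))}"

text \<open>Since p \<ge> n, each element
  has a continuous representative on the closure; we use this canonical representative,
  extended by 0 outside \<Omega>.\<close>
definition Xsp :: "(real^'n) set \<Rightarrow> real \<Rightarrow> (real^'n \<Rightarrow> real) set" where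
  "Xsp \<Omega> p = {u. u \<in> W2p \<Omega> p \<and> continuous_on (closure \<Omega>) u \<and> (\<forall>x. x \<notin> \<Omega> \<longrightarrow> u x = 0)}"

definition Xnorm :: "(real^'n) set \<Rightarrow> real \<Rightarrow> (real^'n \<Rightarrow> real) \<Rightarrow> real" where
  "Xnorm \<Omega> p u = Lpnorm \<Omega> p u + (\<Sum>i\<in>UNIV. Lpnorm \<Omega> p (wd1 \<Omega> u i))
      + (\<Sum>i\<in>UNIV. \<Sum>j\<in>UNIV. Lpnorm \<Omega> p (wd2 \<Omega> u i j))"

definition Lop :: "(real^'n) set \<Rightarrow> (real^'n \<Rightarrow> real^'n^'n) \<Rightarrow> (real^'n \<Rightarrow> real^'n) \<Rightarrow>
    (real^'n \<Rightarrow> real) \<Rightarrow> (real^'n \<Rightarrow> real) \<Rightarrow> real^'n \<Rightarrow> real" where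
  "Lop \<Omega> A bb c u x = (\<Sum>i\<in>UNIV. \<Sum>j\<in>UNIV. A x $ i $ j * wd2 \<Omega> u i j x)
      + (\<Sum>i\<in>UNIV. bb x $ i * wd1 \<Omega> u i x) + c x * u x"

definition lambda1 :: "(real^'n) set \<Rightarrow> (real^'n \<Rightarrow> real^'n^'n) \<Rightarrow> (real^'n \<Rightarrow> real^'n) \<Rightarrow>
    (real^'n \<Rightarrow> real) \<Rightarrow> real" where
  "lambda1 \<Omega> A bb c = Sup {\<mu>. \<exists>\<phi>. \<phi> \<in> W2p_loc \<Omega> (real CARD('n)) \<and> continuous_on \<Omega> \<phi> \<and>
       (\<forall>x\<in>\<Omega>. \<phi> x > 0) \<and> (AE x in lebesgue. x \<in> \<Omega> \<longrightarrow> Lop \<Omega> A bb c \<phi> x + \<mu> * \<phi> x \<le> 0)}"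

definition Fop :: "(real^'n) set \<Rightarrow> (real^'n \<Rightarrow> real^'n^'n) \<Rightarrow> (real^'n \<Rightarrow> real^'n) \<Rightarrow>
    (real^'n \<Rightarrow> real) \<Rightarrow> (real \<Rightarrow> real) \<Rightarrow> (real^'n \<Rightarrow> real) \<Rightarrow> real^'n \<Rightarrow> real" where
  "Fop \<Omega> A bb c f u x = - Lop \<Omega> A bb c u x - f (u x)"

text \<open>Coefficient t of g = z + t \<phi>1 with z in Z.\<close>
definition coef :: "(real^'n) set \<Rightarrow> (real^'n \<Rightarrow> real) \<Rightarrow> (real^'n \<Rightarrow> real) \<Rightarrow> (real^'n \<Rightarrow> real) \<Rightarrow> real" where
  "coef \<Omega> \<phi>1 \<phi>1s g = ip \<Omega> g \<phi>1s / ip \<Omega> \<phi>1 \<phi>1s"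

definition Pproj :: "(real^'n) set \<Rightarrow> (real^'n \<Rightarrow> real) \<Rightarrow> (real^'n \<Rightarrow> real) \<Rightarrow> (real^'n \<Rightarrow> real) \<Rightarrow> real^'n \<Rightarrow> real" where
  "Pproj \<Omega> \<phi>1 \<phi>1s g x = g x - coef \<Omega> \<phi>1 \<phi>1s g * \<phi>1 x"

definition Zsp :: "(real^'n) set \<Rightarrow> real \<Rightarrow> (real^'n \<Rightarrow> real) \<Rightarrow> (real^'n \<Rightarrow> real) set" where
  "Zsp \<Omega> p \<phi>1s = {g \<in> Lp \<Omega> p. ip \<Omega> g \<phi>1s = 0}"

text \<open>Psi(w + t \<phi>1) = P F(w + t \<phi>1) + t \<phi>1, with t = coef u.\<close>
definition Psi where
  "Psi \<Omega> A bb c f \<phi>1 \<phi>1s u x =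
     Pproj \<Omega> \<phi>1 \<phi>1s (Fop \<Omega> A bb c f u) x + coef \<Omega> \<phi>1 \<phi>1s u * \<phi>1 x"

text \<open>Equality in Y = L^p is equality almost everywhere in \<Omega>.\<close>
definition ae_eq :: "(real^'n) set \<Rightarrow> (real^'n \<Rightarrow> real) \<Rightarrow> (real^'n \<Rightarrow> real) \<Rightarrow> bool" where
  "ae_eq \<Omega> g h \<longleftrightarrow> (AE x in lebesgue. x \<in> \<Omega> \<longrightarrow> g x = h x)"

definition Psi_inv where
  "Psi_inv \<Omega> p A bb c f \<phi>1 \<phi>1s g =
     (THE u. u \<in> Xsp \<Omega> p \<and> ae_eq \<Omega> (Psi \<Omega> A bb c f \<phi>1 \<phi>1s u) g)"

definition htilde where
  "htilde \<Omega> p A bb c f \<phi>1 \<phi>1s z t =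
     coef \<Omega> \<phi>1 \<phi>1s (Fop \<Omega> A bb c f (Psi_inv \<Omega> p A bb c f \<phi>1 \<phi>1s (\<lambda>x. z x + t * \<phi>1 x)))"

definition bilip_homeo where
  "bilip_homeo \<Omega> p A bb c f \<phi>1 \<phi>1s \<longleftrightarrow>
     (\<forall>u\<in>Xsp \<Omega> p. Psi \<Omega> A bb c f \<phi>1 \<phi>1s u \<in> Lp \<Omega> p) \<and>
     (\<exists>C. \<forall>u\<in>Xsp \<Omega> p. \<forall>v\<in>Xsp \<Omega> p.
        Lpnorm \<Omega> p (\<lambda>x. Psi \<Omega> A bb c f \<phi>1 \<phi>1s u x - Psi \<Omega> A bb c f \<phi>1 \<phi>1s v x)
          \<le> C * Xnorm \<Omega> p (\<lambda>x. u x - v x)) \<and>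
     (\<exists>c0>0. \<forall>u\<in>Xsp \<Omega> p. \<forall>v\<in>Xsp \<Omega> p.
        Lpnorm \<Omega> p (\<lambda>x. Psi \<Omega> A bb c f \<phi>1 \<phi>1s u x - Psi \<Omega> A bb c f \<phi>1 \<phi>1s v x)
          \<ge> c0 * Xnorm \<Omega> p (\<lambda>x. u x - v x)) \<and>
     (\<forall>g\<in>Lp \<Omega> p. \<exists>u\<in>Xsp \<Omega> p. ae_eq \<Omega> (Psi \<Omega> A bb c f \<phi>1 \<phi>1s u) g)"

text \<open>Condition (AP)_b with lower slope a = 0.\<close>
definition AP :: "(real \<Rightarrow> real) \<Rightarrow> real \<Rightarrow> bool" where
  "AP f b \<longleftrightarrow> (\<forall>x y. x \<noteq> y \<longrightarrow> 0 \<le> (f x - f y) / (x - y) \<and> (f x - f y) / (x - y) \<le> b) \<and>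
     (\<exists>M\<ge>0. \<forall>s. f s \<ge> max (b * s - M) (- M))"

end

theory Submission
  imports Defs
begin

text \<open>
  Since \<open>\<Psi>\<close> is a bi-Lipschitz homeomorphism of X onto Y, \<open>u(z,t) = \<Psi>\<^sup>-\<^sup>1(z + t \<phi>\<^sub>1)\<close> is
  Lipschitz in \<open>(z,t)\<close>. Writing \<open>c(g)\<close> for the \<open>\<phi>\<^sub>1\<close>-coefficient of \<open>g\<close>, the identity
  \<open>\<Psi> u = F u - c(F u) \<phi>\<^sub>1 + c(u) \<phi>\<^sub>1\<close> shows \<open>c(u(z,t)) = t\<close> and \<open>F u(z,t) = z + h(z,t) \<phi>\<^sub>1\<close>.
  Testing \<open>F u = - L u - f(u)\<close> against \<open>\<phi>\<^sub>1\<^sup>*\<close> gives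
  \<open>h(z,t) = \<lambda>\<^sub>1 t - \<langle>f(u(z,t)), \<phi>\<^sub>1\<^sup>*\<rangle> / \<langle>\<phi>\<^sub>1, \<phi>\<^sub>1\<^sup>*\<rangle>\<close>; as \<open>f\<close> is Lipschitz and
  \<open>g \<mapsto> \<integral> |g| \<phi>\<^sub>1\<^sup>*\<close> is bounded on \<open>L\<^sup>p\<close> (a gliding hump argument), \<open>h\<close> is Lipschitz.
  Finally \<open>u \<mapsto> c(u)\<close> maps the solutions of \<open>F u = z + s \<phi>\<^sub>1\<close> bijectively onto those of
  \<open>h(z,t) = s\<close>, with inverse \<open>t \<mapsto> u(z,t)\<close>.
\<close>

section \<open>Lebesgue spaces\<close>

lemma Lp_int_eq_indicator_mult:
  "Lp_int \<Omega> p g = (\<integral>\<^sup>+ x. ennreal (\<bar>indicator \<Omega> x * g x\<bar> powr p) \<partial>lebesgue)"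
  unfolding Lp_int_def by (intro nn_integral_cong) (auto simp: indicator_def)

lemma borel_measurable_indicator_mult_restrict:
  fixes g :: "'a::euclidean_space \<Rightarrow> real"
  assumes "\<Omega> \<in> sets lebesgue" "g \<in> borel_measurable (lebesgue_on \<Omega>)"
  shows "(\<lambda>x. indicator \<Omega> x * g x) \<in> borel_measurable lebesgue"
  using assms borel_measurable_restrict_space_iff[of \<Omega> lebesgue g] by simp

lemma borel_measurable_Lp_integrand:
  assumes "\<Omega> \<in> sets lebesgue" "g \<in> borel_measurable (lebesgue_on \<Omega>)"
  shows "(\<lambda>x. ennreal (\<bar>indicator \<Omega> x * g x\<bar> powr p)) \<in> borel_measurable lebesgue"
  using borel_measurable_indicator_mult_restrict[OF assms] by measurable

lemma borel_measurable_restrict_cong_AE: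
  fixes g h :: "'a::euclidean_space \<Rightarrow> real"
  assumes "\<Omega> \<in> sets lebesgue" "g \<in> borel_measurable (lebesgue_on \<Omega>)"
    and "AE x in lebesgue. x \<in> \<Omega> \<longrightarrow> g x = h x"
  shows "h \<in> borel_measurable (lebesgue_on \<Omega>)"
proof -
  have "AE x in lebesgue. indicator \<Omega> x * g x = indicator \<Omega> x * h x"
    using assms(3) by eventually_elim (auto simp: indicator_def)
  with borel_measurable_indicator_mult_restrict[OF assms(1,2)]
  have "(\<lambda>x. indicator \<Omega> x * h x) \<in> borel_measurable lebesgue"
    by (rule borel_measurable_AE)
  then show ?thesis using assms(1) borel_measurable_restrict_space_iff[of \<Omega> lebesgue h] by simp
qed

lemma open_imp_sets_lebesgue: "open S \<Longrightarrow> S \<in> sets lebesgue"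
  by (metis borel_open sets_completionI_sets sets_lborel)

lemma continuous_on_AE_eq_imp_eq:
  fixes u v :: "'a::euclidean_space \<Rightarrow> real"
  assumes "open \<Omega>" "continuous_on \<Omega> u" "continuous_on \<Omega> v"
    and "AE x in lebesgue. x \<in> \<Omega> \<longrightarrow> u x = v x" "x \<in> \<Omega>"
  shows "u x = v x"
proof (rule ccontr)
  define S where "S = \<Omega> \<inter> (\<lambda>y. u y - v y) -` (- {0})"
  have "open S" unfolding S_def
    by (intro continuous_open_preimage continuous_on_diff assms) auto
  moreover have "AE y \<in> S in lebesgue. y \<in> {}"
    using assms(4) by eventually_elim (auto simp: S_def)
  moreover assume "u x \<noteq> v x"
  then have "x \<in> S" using assms(5) by (simp add: S_def)
  ultimately show False using mem_closed_if_AE_lebesgue_open[of S "{}"] by blast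
qed

lemma Lp_int_mono:
  assumes "\<And>x. x \<in> \<Omega> \<Longrightarrow> \<bar>g x\<bar> \<le> \<bar>h x\<bar>" "p \<ge> 0"
  shows "Lp_int \<Omega> p g \<le> Lp_int \<Omega> p h"
  unfolding Lp_int_def using assms
  by (intro nn_integral_mono) (auto simp: indicator_def intro!: powr_mono2)

lemma Lp_dominated:
  assumes "g \<in> borel_measurable (lebesgue_on \<Omega>)" "h \<in> Lp \<Omega> p"
    and "\<And>x. x \<in> \<Omega> \<Longrightarrow> \<bar>g x\<bar> \<le> \<bar>h x\<bar>" "p \<ge> 0"
  shows "g \<in> Lp \<Omega> p"
  using assms Lp_int_mono[of \<Omega> g h p] unfolding Lp_def by auto

lemma Lp_abs: "g \<in> Lp \<Omega> p \<Longrightarrow> p \<ge> 0 \<Longrightarrow> (\<lambda>x. \<bar>g x\<bar>) \<in> Lp \<Omega> p"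
  by (rule Lp_dominated) (auto simp: Lp_def)

lemma Lp_int_cong_AE:
  "AE x in lebesgue. x \<in> \<Omega> \<longrightarrow> g x = h x \<Longrightarrow> Lp_int \<Omega> p g = Lp_int \<Omega> p h"
  unfolding Lp_int_def by (erule nn_integral_cong_AE[OF AE_mp]) (auto simp: indicator_def)

lemma Lpnorm_cong_AE:
  "AE x in lebesgue. x \<in> \<Omega> \<longrightarrow> g x = h x \<Longrightarrow> Lpnorm \<Omega> p g = Lpnorm \<Omega> p h"
  unfolding Lpnorm_def by (simp add: Lp_int_cong_AE)

lemma Lp_cong_AE:
  assumes "\<Omega> \<in> sets lebesgue" "g \<in> Lp \<Omega> p" "AE x in lebesgue. x \<in> \<Omega> \<longrightarrow> g x = h x"
  shows "h \<in> Lp \<Omega> p"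
  using assms borel_measurable_restrict_cong_AE[OF assms(1) _ assms(3)] Lp_int_cong_AE[OF assms(3)]
  unfolding Lp_def by auto

lemma Lpnorm_nonneg: "Lpnorm \<Omega> p g \<ge> 0"
  unfolding Lpnorm_def by simp

lemma Lpnorm_zero: "Lpnorm \<Omega> p (\<lambda>x. 0) = 0"
  unfolding Lpnorm_def Lp_int_def by simp

lemma Lp_int_eq_Lpnorm_powr:
  assumes "g \<in> Lp \<Omega> p" "p > 0"
  shows "Lp_int \<Omega> p g = ennreal (Lpnorm \<Omega> p g powr p)"
  using assms unfolding Lp_def Lpnorm_def by (auto simp: powr_powr)

lemma Lpnorm_eq_0_imp_AE_zero:
  assumes "\<Omega> \<in> sets lebesgue" "g \<in> Lp \<Omega> p" "p > 0" "Lpnorm \<Omega> p g = 0"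
  shows "AE x in lebesgue. x \<in> \<Omega> \<longrightarrow> g x = 0"
proof -
  have "Lp_int \<Omega> p g = 0"
    using Lp_int_eq_Lpnorm_powr[OF assms(2,3)] assms(4) by simp
  then have "AE x in lebesgue. ennreal (\<bar>indicator \<Omega> x * g x\<bar> powr p) = 0"
    using nn_integral_0_iff_AE[OF borel_measurable_Lp_integrand[OF assms(1), of g p]] assms(2)
    by (simp add: Lp_int_eq_indicator_mult Lp_def)
  then show ?thesis by eventually_elim (auto simp: indicator_def split: if_splits)
qed

lemma Lp_int_cmult:
  assumes "\<Omega> \<in> sets lebesgue" "g \<in> borel_measurable (lebesgue_on \<Omega>)"
  shows "Lp_int \<Omega> p (\<lambda>x. k * g x) = ennreal (\<bar>k\<bar> powr p) * Lp_int \<Omega> p g"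
proof -
  have "Lp_int \<Omega> p (\<lambda>x. k * g x) =
      (\<integral>\<^sup>+ x. ennreal (\<bar>k\<bar> powr p) * ennreal (\<bar>indicator \<Omega> x * g x\<bar> powr p) \<partial>lebesgue)"
    unfolding Lp_int_eq_indicator_mult
    by (intro nn_integral_cong) (simp add: abs_mult powr_mult ennreal_mult' mult.left_commute)
  also have "\<dots> = ennreal (\<bar>k\<bar> powr p) * Lp_int \<Omega> p g"
    unfolding Lp_int_eq_indicator_mult
    by (rule nn_integral_cmult[OF borel_measurable_Lp_integrand[OF assms]])
  finally show ?thesis .
qed

lemma Lpnorm_cmult:
  assumes "\<Omega> \<in> sets lebesgue" "g \<in> borel_measurable (lebesgue_on \<Omega>)" "p > 0"
  shows "Lpnorm \<Omega> p (\<lambda>x. k * g x) = \<bar>k\<bar> * Lpnorm \<Omega> p g"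
  unfolding Lpnorm_def Lp_int_cmult[OF assms(1,2)] using assms(3)
  by (simp add: enn2real_mult powr_mult powr_powr)

lemma Lp_cmult:
  assumes "\<Omega> \<in> sets lebesgue" "g \<in> Lp \<Omega> p"
  shows "(\<lambda>x. k * g x) \<in> Lp \<Omega> p"
  using assms Lp_int_cmult[OF assms(1), of g p k] unfolding Lp_def
  by (auto simp: ennreal_mult_less_top)

lemma abs_add_powr_le:
  fixes a b p :: real
  assumes "p \<ge> 0"
  shows "\<bar>a + b\<bar> powr p \<le> 2 powr p * (\<bar>a\<bar> powr p + \<bar>b\<bar> powr p)"
proof -
  have "\<bar>a + b\<bar> powr p \<le> (2 * max \<bar>a\<bar> \<bar>b\<bar>) powr p"
    using assms by (intro powr_mono2) auto
  also have "\<dots> = 2 powr p * max \<bar>a\<bar> \<bar>b\<bar> powr p" by (simp add: powr_mult)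
  also have "max \<bar>a\<bar> \<bar>b\<bar> powr p \<le> \<bar>a\<bar> powr p + \<bar>b\<bar> powr p"
    by (simp add: max_def)
  finally show ?thesis by (simp add: mult_left_mono)
qed

lemma Lp_add:
  assumes \<Omega>: "\<Omega> \<in> sets lebesgue" and g: "g \<in> Lp \<Omega> p" and h: "h \<in> Lp \<Omega> p" and "p \<ge> 0"
  shows "(\<lambda>x. g x + h x) \<in> Lp \<Omega> p"
proof -
  have mg: "g \<in> borel_measurable (lebesgue_on \<Omega>)" and mh: "h \<in> borel_measurable (lebesgue_on \<Omega>)"
    using g h unfolding Lp_def by auto
  let ?G = "\<lambda>x. ennreal (\<bar>indicator \<Omega> x * g x\<bar> powr p)"
  let ?H = "\<lambda>x. ennreal (\<bar>indicator \<Omega> x * h x\<bar> powr p)"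
  have "Lp_int \<Omega> p (\<lambda>x. g x + h x) \<le> (\<integral>\<^sup>+ x. ennreal (2 powr p) * (?G x + ?H x) \<partial>lebesgue)"
    unfolding Lp_int_eq_indicator_mult using assms(4)
    by (intro nn_integral_mono)
      (simp add: distrib_left abs_add_powr_le[OF assms(4), unfolded distrib_left]
        flip: ennreal_plus ennreal_mult)
  also have "\<dots> = ennreal (2 powr p) * (Lp_int \<Omega> p g + Lp_int \<Omega> p h)"
    unfolding Lp_int_eq_indicator_mult
    using borel_measurable_Lp_integrand[OF \<Omega> mg] borel_measurable_Lp_integrand[OF \<Omega> mh]
    by (simp add: nn_integral_cmult nn_integral_add)
  also have "\<dots> < \<infinity>" using g h unfolding Lp_def by (simp add: ennreal_mult_less_top)
  finally show ?thesis using mg mh unfolding Lp_def by auto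
qed

lemma Lp_diff:
  assumes "\<Omega> \<in> sets lebesgue" "g \<in> Lp \<Omega> p" "h \<in> Lp \<Omega> p" "p \<ge> 0"
  shows "(\<lambda>x. g x - h x) \<in> Lp \<Omega> p"
  using Lp_add[OF assms(1,2) Lp_cmult[OF assms(1,3), of "-1"] assms(4)] by simp

lemma Lp_const:
  assumes "\<Omega> \<in> sets lebesgue" "emeasure lebesgue \<Omega> < \<infinity>"
  shows "(\<lambda>x. k) \<in> Lp \<Omega> p"
proof -
  have "Lp_int \<Omega> p (\<lambda>x. k) = (\<integral>\<^sup>+ x. ennreal (\<bar>k\<bar> powr p) * indicator \<Omega> x \<partial>lebesgue)"
    unfolding Lp_int_def by (intro nn_integral_cong) (auto simp: indicator_def)
  also have "\<dots> = ennreal (\<bar>k\<bar> powr p) * emeasure lebesgue \<Omega>"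
    by (rule nn_integral_cmult_indicator[OF assms(1)])
  finally show ?thesis using assms unfolding Lp_def by (simp add: ennreal_mult_less_top)
qed

lemma Lp_lipschitz_comp:
  assumes "\<Omega> \<in> sets lebesgue" "emeasure lebesgue \<Omega> < \<infinity>" "p \<ge> 0"
    and f: "lipschitz_on K UNIV f" and u: "u \<in> Lp \<Omega> p"
  shows "(\<lambda>x. f (u x)) \<in> Lp \<Omega> p"
proof (rule Lp_dominated)
  have "continuous_on UNIV f" using f by (rule lipschitz_on_continuous_on)
  then show "(\<lambda>x. f (u x)) \<in> borel_measurable (lebesgue_on \<Omega>)"
    using u unfolding Lp_def by (auto intro: borel_measurable_continuous_on)
  show "(\<lambda>x. \<bar>f 0\<bar> + K * \<bar>u x\<bar>) \<in> Lp \<Omega> p"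
    using assms by (intro Lp_add Lp_const Lp_cmult Lp_abs) auto
  show "\<bar>f (u x)\<bar> \<le> \<bar>\<bar>f 0\<bar> + K * \<bar>u x\<bar>\<bar>" for x
    using lipschitz_onD[OF f, of "u x" 0] lipschitz_on_nonneg[OF f] by (simp add: dist_real_def)
qed (use assms in auto)

lemma Lpnorm_le_Xnorm: "Lpnorm \<Omega> p u \<le> Xnorm \<Omega> p u"
  unfolding Xnorm_def by (simp add: Lpnorm_nonneg sum_nonneg)

lemma Xsp_subset_Lp: "Xsp \<Omega> p \<subseteq> Lp \<Omega> p"
  unfolding Xsp_def W2p_def by auto

lemma Xsp_eqI:
  assumes "open \<Omega>" "p > 0" "u \<in> Xsp \<Omega> p" "v \<in> Xsp \<Omega> p"
    and "Lpnorm \<Omega> p (\<lambda>x. u x - v x) = 0"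
  shows "u = v"
proof
  fix x
  have "AE x in lebesgue. x \<in> \<Omega> \<longrightarrow> u x - v x = 0"
    using assms Xsp_subset_Lp
    by (intro Lpnorm_eq_0_imp_AE_zero Lp_diff open_imp_sets_lebesgue) auto
  then have "AE x in lebesgue. x \<in> \<Omega> \<longrightarrow> u x = v x" by eventually_elim simp
  moreover have "continuous_on \<Omega> u" "continuous_on \<Omega> v"
    using assms(3,4) unfolding Xsp_def by (auto intro: continuous_on_subset[OF _ closure_subset])
  ultimately show "u x = v x"
    using assms(1,3,4) continuous_on_AE_eq_imp_eq[of \<Omega> u v x] unfolding Xsp_def
    by (cases "x \<in> \<Omega>") auto
qed

lemma SUP_powr_le_suminf:
  fixes a :: "nat \<Rightarrow> real"
  assumes nonneg: "\<And>k. 0 \<le> a k" and p: "p > 0" and fin: "(\<Sum>k. ennreal (a k powr p)) < \<infinity>"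
  defines "G \<equiv> enn2real (SUP k. ennreal (a k))"
  shows "a k \<le> G" and "ennreal (G powr p) \<le> (\<Sum>k. ennreal (a k powr p))"
proof -
  define s where "s = enn2real (\<Sum>k. ennreal (a k powr p))"
  have s0: "0 \<le> s" by (simp add: s_def)
  have s: "(\<Sum>k. ennreal (a k powr p)) = ennreal s"
    unfolding s_def using fin by (simp add: less_top)
  have bound: "a k \<le> s powr (1/p)" for k
  proof -
    have "ennreal (a k powr p) \<le> ennreal s"
      using sum_le_suminf[of "\<lambda>k. ennreal (a k powr p)" "{k}"] s by (simp add: summableI)
    then have "a k powr p \<le> s" by (simp add: ennreal_le_iff s0)
    then have "(a k powr p) powr (1/p) \<le> s powr (1/p)"
      using p by (intro powr_mono2) simp_all
    then show ?thesis using p nonneg[of k] by (simp add: powr_powr)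
  qed
  then have sup_le: "(SUP k. ennreal (a k)) \<le> ennreal (s powr (1/p))"
    by (intro SUP_least) (simp add: ennreal_leI)
  then have G: "ennreal G = (SUP k. ennreal (a k))"
    unfolding G_def by (intro ennreal_enn2real le_less_trans[OF sup_le]) simp
  have "ennreal (a k) \<le> ennreal G" unfolding G by (rule SUP_upper) simp
  then show "a k \<le> G" by (simp add: G_def)
  have "G \<le> s powr (1/p)"
    using G sup_le by (metis ennreal_le_iff powr_ge_zero)
  then have "G powr p \<le> (s powr (1/p)) powr p"
    using p by (intro powr_mono2) (simp_all add: G_def)
  also have "\<dots> = s" using p s0 by (simp add: powr_powr)
  finally show "ennreal (G powr p) \<le> (\<Sum>k. ennreal (a k powr p))"
    unfolding s by (rule ennreal_leI)
qed

lemma Lp_SUP_bound: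
  assumes \<Omega>: "\<Omega> \<in> sets lebesgue" and p: "p > 0"
    and g: "\<And>k. g k \<in> borel_measurable (lebesgue_on \<Omega>)" "\<And>k x. 0 \<le> g k x"
    and summable: "(\<Sum>k. Lp_int \<Omega> p (g k)) < \<infinity>"
  obtains G where "G \<in> Lp \<Omega> p" "AE x in lebesgue. x \<in> \<Omega> \<longrightarrow> (\<forall>k. g k x \<le> G x)"
proof -
  define S where "S x = (\<Sum>k. ennreal (\<bar>indicator \<Omega> x * g k x\<bar> powr p))" for x
  define G where "G x = enn2real (SUP k. ennreal (g k x))" for x
  have mS: "S \<in> borel_measurable lebesgue"
    unfolding S_def by (rule borel_measurable_suminf_order borel_measurable_Lp_integrand[OF \<Omega> g(1)])+
  have S_integral: "(\<integral>\<^sup>+ x. S x \<partial>lebesgue) = (\<Sum>k. Lp_int \<Omega> p (g k))"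
    unfolding S_def Lp_int_eq_indicator_mult
    by (rule nn_integral_suminf) (rule borel_measurable_Lp_integrand[OF \<Omega> g(1)])
  with summable have AE_fin: "AE x in lebesgue. S x < \<infinity>"
    using nn_integral_PInf_AE[OF mS] by (auto simp: top.not_eq_extremum)
  have S_eq: "S x = (\<Sum>k. ennreal (g k x powr p))" if "x \<in> \<Omega>" for x
    using that g(2) by (simp add: S_def)
  have G_upper: "AE x in lebesgue. x \<in> \<Omega> \<longrightarrow> (\<forall>k. g k x \<le> G x)"
    using AE_fin
  proof eventually_elim
    case (elim x)
    show ?case
    proof (intro impI allI)
      fix k assume "x \<in> \<Omega>"
      with elim have "(\<Sum>k. ennreal (g k x powr p)) < \<infinity>" by (simp add: S_eq)
      from SUP_powr_le_suminf(1)[of "\<lambda>k. g k x", OF g(2) p this] show "g k x \<le> G x"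
        by (simp only: G_def)
    qed
  qed
  have "Lp_int \<Omega> p G \<le> (\<integral>\<^sup>+ x. S x \<partial>lebesgue)"
    unfolding Lp_int_def
  proof (intro nn_integral_mono_AE)
    show "AE x in lebesgue. ennreal (indicator \<Omega> x * \<bar>G x\<bar> powr p) \<le> S x"
      using AE_fin
    proof eventually_elim
      case (elim x)
      show ?case
      proof (cases "x \<in> \<Omega>")
        case True
        with elim have "(\<Sum>k. ennreal (g k x powr p)) < \<infinity>" by (simp add: S_eq)
        from SUP_powr_le_suminf(2)[of "\<lambda>k. g k x", OF g(2) p this] show ?thesis
          using True g(2) by (simp add: S_eq G_def)
      qed simp
    qed
  qed
  moreover have "G \<in> borel_measurable (lebesgue_on \<Omega>)"
    unfolding G_def
    by (intro borel_measurable_enn2real borel_measurable_SUP measurable_compose[OF g(1) measurable_ennreal])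
      simp_all
  ultimately have "G \<in> Lp \<Omega> p"
    using summable S_integral unfolding Lp_def by auto
  with G_upper show ?thesis by (intro that)
qed

section \<open>Pairing with a nonnegative weight\<close>

lemma ip_cong_AE:
  assumes "\<Omega> \<in> sets lebesgue" "g \<in> borel_measurable (lebesgue_on \<Omega>)"
    and "h \<in> borel_measurable (lebesgue_on \<Omega>)" "w \<in> borel_measurable (lebesgue_on \<Omega>)"
    and "AE x in lebesgue. x \<in> \<Omega> \<longrightarrow> g x = h x"
  shows "ip \<Omega> g w = ip \<Omega> h w"
  unfolding ip_def set_lebesgue_integral_def
proof (rule integral_cong_AE)
  show "(\<lambda>x. indicator \<Omega> x *\<^sub>R (g x * w x)) \<in> borel_measurable lebesgue"
    "(\<lambda>x. indicator \<Omega> x *\<^sub>R (h x * w x)) \<in> borel_measurable lebesgue"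
    using borel_measurable_indicator_mult_restrict[OF assms(1) borel_measurable_times[OF assms(2,4)]]
      borel_measurable_indicator_mult_restrict[OF assms(1) borel_measurable_times[OF assms(3,4)]]
    by simp_all
  show "AE x in lebesgue. indicator \<Omega> x *\<^sub>R (g x * w x) = indicator \<Omega> x *\<^sub>R (h x * w x)"
    using assms(5) by eventually_elim (auto simp: indicator_def)
qed

lemma ip_cmult: "ip \<Omega> (\<lambda>x. a * g x) w = a * ip \<Omega> g w"
  unfolding ip_def by (simp add: mult.assoc)

lemma ip_add:
  assumes "set_integrable lebesgue \<Omega> (\<lambda>x. g x * w x)" "set_integrable lebesgue \<Omega> (\<lambda>x. h x * w x)"
  shows "ip \<Omega> (\<lambda>x. g x + h x) w = ip \<Omega> g w + ip \<Omega> h w"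
  unfolding ip_def distrib_right by (rule set_integral_add(2)[OF assms])

lemma ip_diff:
  assumes "set_integrable lebesgue \<Omega> (\<lambda>x. g x * w x)" "set_integrable lebesgue \<Omega> (\<lambda>x. h x * w x)"
  shows "ip \<Omega> (\<lambda>x. g x - h x) w = ip \<Omega> g w - ip \<Omega> h w"
  unfolding ip_def left_diff_distrib by (rule set_integral_diff(2)[OF assms])

lemma ip_mono:
  assumes "set_integrable lebesgue \<Omega> (\<lambda>x. g x * w x)" "set_integrable lebesgue \<Omega> (\<lambda>x. h x * w x)"
    and "AE x in lebesgue. x \<in> \<Omega> \<longrightarrow> g x \<le> h x" "AE x in lebesgue. x \<in> \<Omega> \<longrightarrow> w x \<ge> 0"
  shows "ip \<Omega> g w \<le> ip \<Omega> h w"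
  unfolding ip_def using assms(3,4)
  by (intro set_integral_mono_AE[OF assms(1,2)]) (auto elim!: AE_mp intro: mult_right_mono)

lemma abs_ip_diff_le:
  assumes "set_integrable lebesgue \<Omega> (\<lambda>x. g x * w x)" "set_integrable lebesgue \<Omega> (\<lambda>x. h x * w x)"
    and "set_integrable lebesgue \<Omega> (\<lambda>x. \<bar>g x - h x\<bar> * w x)"
    and "AE x in lebesgue. x \<in> \<Omega> \<longrightarrow> w x \<ge> 0"
  shows "\<bar>ip \<Omega> g w - ip \<Omega> h w\<bar> \<le> ip \<Omega> (\<lambda>x. \<bar>g x - h x\<bar>) w"
proof -
  have d: "set_integrable lebesgue \<Omega> (\<lambda>x. (g x - h x) * w x)"
    using set_integral_diff(1)[OF assms(1,2)] by (simp add: left_diff_distrib)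
  have "ip \<Omega> (\<lambda>x. g x - h x) w \<le> ip \<Omega> (\<lambda>x. \<bar>g x - h x\<bar>) w"
    by (rule ip_mono[OF d assms(3) AE_I2 assms(4)]) auto
  moreover have "ip \<Omega> (\<lambda>x. -1 * (g x - h x)) w \<le> ip \<Omega> (\<lambda>x. \<bar>g x - h x\<bar>) w"
    using set_integrable_mult_right[OF d, of "-1"]
    by (intro ip_mono[OF _ assms(3) AE_I2 assms(4)]) (simp_all only: mult.assoc, auto)
  ultimately show ?thesis
    using ip_cmult[of \<Omega> "-1" "\<lambda>x. g x - h x" w] ip_diff[OF assms(1,2)] by simp
qed

lemma ip_abs_eq_0_if_Lpnorm_eq_0:
  assumes "\<Omega> \<in> sets lebesgue" "g \<in> Lp \<Omega> p" "p > 0" "Lpnorm \<Omega> p g = 0"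
  shows "ip \<Omega> (\<lambda>x. \<bar>g x\<bar>) w = 0"
proof -
  have "AE x in lebesgue. x \<in> \<Omega> \<longrightarrow> g x = 0"
    by (rule Lpnorm_eq_0_imp_AE_zero[OF assms])
  then show ?thesis
    unfolding ip_def set_lebesgue_integral_def
    by (intro integral_eq_zero_AE) (auto elim!: AE_mp simp: indicator_def)
qed

lemma Lp_int_normalized:
  assumes \<Omega>: "\<Omega> \<in> sets lebesgue" and g: "g \<in> Lp \<Omega> p" and p: "p > 0"
    and "Lpnorm \<Omega> p g > 0" "a \<ge> 0"
  shows "Lp_int \<Omega> p (\<lambda>x. a / Lpnorm \<Omega> p g * \<bar>g x\<bar>) = ennreal (a powr p)"
proof -
  have "(\<lambda>x. \<bar>g x\<bar>) \<in> borel_measurable (lebesgue_on \<Omega>)" using g unfolding Lp_def by auto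
  then have "Lp_int \<Omega> p (\<lambda>x. a / Lpnorm \<Omega> p g * \<bar>g x\<bar>)
      = ennreal (\<bar>a / Lpnorm \<Omega> p g\<bar> powr p) * Lp_int \<Omega> p (\<lambda>x. \<bar>g x\<bar>)"
    by (rule Lp_int_cmult[OF \<Omega>])
  also have "Lp_int \<Omega> p (\<lambda>x. \<bar>g x\<bar>) = ennreal (Lpnorm \<Omega> p g powr p)"
    using Lp_int_eq_Lpnorm_powr[OF g p] by (simp add: Lp_int_def)
  also have "ennreal (\<bar>a / Lpnorm \<Omega> p g\<bar> powr p) * \<dots> = ennreal (a powr p)"
    using assms(4,5) by (simp add: powr_divide ennreal_mult'[symmetric])
  finally show ?thesis .
qed

text \<open>Gliding hump: the normalized functions \<open>h\<^sub>k = 2\<^sup>-\<^sup>k |g\<^sub>k| / \<parallel>g\<^sub>k\<parallel>\<^sub>p\<close> have summable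
  \<open>\<parallel>h\<^sub>k\<parallel>\<^sub>p\<^sup>p\<close>, so they all lie below one \<open>G \<in> L\<^sup>p\<close>, whereas \<open>\<integral> h\<^sub>k w > 2\<^sup>k\<close>.\<close>
lemma Lp_pairing_not_all_gt_pow4:
  assumes \<Omega>: "\<Omega> \<in> sets lebesgue" and p: "p \<ge> 1"
    and w_nonneg: "AE x in lebesgue. x \<in> \<Omega> \<longrightarrow> w x \<ge> 0"
    and integrable: "\<And>g. g \<in> Lp \<Omega> p \<Longrightarrow> set_integrable lebesgue \<Omega> (\<lambda>x. g x * w x)"
    and gs: "\<And>k. gs k \<in> Lp \<Omega> p"
  shows "\<not> (\<forall>k::nat. ip \<Omega> (\<lambda>x. \<bar>gs k x\<bar>) w > 4 ^ k * Lpnorm \<Omega> p (gs k))"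
proof
  assume big: "\<forall>k. ip \<Omega> (\<lambda>x. \<bar>gs k x\<bar>) w > 4 ^ k * Lpnorm \<Omega> p (gs k)"
  define N where "N k = Lpnorm \<Omega> p (gs k)" for k
  have p0: "p > 0" using p by simp
  have N_pos: "N k > 0" for k
    using big ip_abs_eq_0_if_Lpnorm_eq_0[OF \<Omega> gs p0, of k w] Lpnorm_nonneg[of \<Omega> p "gs k"]
    unfolding N_def by (metis less_eq_real_def mult_zero_right)
  define h where "h k x = (1/2) ^ k / N k * \<bar>gs k x\<bar>" for k x
  have h_Lp: "h k \<in> Lp \<Omega> p" for k
    unfolding h_def using p0 by (intro Lp_cmult[OF \<Omega>] Lp_abs gs) simp
  have "Lp_int \<Omega> p (h k) = ennreal (((1/2) ^ k) powr p)" for k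
    unfolding h_def N_def by (rule Lp_int_normalized[OF \<Omega> gs p0 N_pos[unfolded N_def]]) simp
  then have "(\<Sum>k. Lp_int \<Omega> p (h k)) \<le> (\<Sum>k. ennreal ((1/2) ^ k))"
    using powr_le_one_le[of "(1/2) ^ _" p] p
    by (intro suminf_le summableI) (simp_all add: power_le_one ennreal_leI)
  also have "\<dots> = ennreal (\<Sum>k. (1/2) ^ k)"
    by (rule suminf_ennreal2) (simp_all add: summable_geometric)
  also have "(\<Sum>k. (1/2::real) ^ k) = 2"
    using suminf_geometric[of "1/2::real"] by simp
  finally have summable: "(\<Sum>k. Lp_int \<Omega> p (h k)) < \<infinity>"
    by (rule le_less_trans) simp
  have "h k \<in> borel_measurable (lebesgue_on \<Omega>)" for k
    using h_Lp unfolding Lp_def by auto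
  moreover have "0 \<le> h k x" for k x
    using N_pos[of k] by (simp add: h_def)
  ultimately obtain G where G: "G \<in> Lp \<Omega> p"
    and h_le_G: "AE x in lebesgue. x \<in> \<Omega> \<longrightarrow> (\<forall>k. h k x \<le> G x)"
    using Lp_SUP_bound[OF \<Omega> p0 _ _ summable] by blast
  have "2 ^ k < ip \<Omega> G w" for k
  proof -
    have "(2::real) ^ k = (1/2) ^ k / N k * (4 ^ k * N k)"
      using N_pos[of k] by (simp add: field_simps flip: power_mult_distrib)
    also have "\<dots> < (1/2) ^ k / N k * ip \<Omega> (\<lambda>x. \<bar>gs k x\<bar>) w"
      using big N_pos[of k] by (intro mult_strict_left_mono) (simp_all add: N_def)
    also have "\<dots> = ip \<Omega> (h k) w" unfolding h_def ip_cmult ..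
    also have "\<dots> \<le> ip \<Omega> G w"
      using h_le_G w_nonneg by (intro ip_mono integrable h_Lp G) auto
    finally show ?thesis .
  qed
  moreover obtain k where "ip \<Omega> G w < 2 ^ k" using real_arch_pow[of "2::real"] by auto
  ultimately show False using less_asym by blast
qed

lemma Lp_pairing_bounded:
  assumes \<Omega>: "\<Omega> \<in> sets lebesgue" and p: "p \<ge> 1"
    and w_nonneg: "AE x in lebesgue. x \<in> \<Omega> \<longrightarrow> w x \<ge> 0"
    and integrable: "\<And>g. g \<in> Lp \<Omega> p \<Longrightarrow> set_integrable lebesgue \<Omega> (\<lambda>x. g x * w x)"
  obtains C where "C \<ge> 0" "\<And>g. g \<in> Lp \<Omega> p \<Longrightarrow> ip \<Omega> (\<lambda>x. \<bar>g x\<bar>) w \<le> C * Lpnorm \<Omega> p g"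
proof -
  have "\<exists>C. \<forall>g\<in>Lp \<Omega> p. ip \<Omega> (\<lambda>x. \<bar>g x\<bar>) w \<le> C * Lpnorm \<Omega> p g"
  proof (rule ccontr)
    assume "\<not> ?thesis"
    then have "\<forall>k::nat. \<exists>g\<in>Lp \<Omega> p. ip \<Omega> (\<lambda>x. \<bar>g x\<bar>) w > 4 ^ k * Lpnorm \<Omega> p g"
      by (meson not_le)
    then obtain gs where "\<And>k. gs k \<in> Lp \<Omega> p"
      and "\<And>k. ip \<Omega> (\<lambda>x. \<bar>gs k x\<bar>) w > 4 ^ k * Lpnorm \<Omega> p (gs k)"
      by metis
    with Lp_pairing_not_all_gt_pow4[OF assms] show False by blast
  qed
  then obtain C where "\<forall>g\<in>Lp \<Omega> p. ip \<Omega> (\<lambda>x. \<bar>g x\<bar>) w \<le> C * Lpnorm \<Omega> p g" ..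
  then have "\<forall>g\<in>Lp \<Omega> p. ip \<Omega> (\<lambda>x. \<bar>g x\<bar>) w \<le> max C 0 * Lpnorm \<Omega> p g"
    by (metis Lpnorm_nonneg max.cobounded1 mult_right_mono order_trans)
  then show ?thesis by (intro that[of "max C 0"]) auto
qed

section \<open>Reduction to the height function\<close>

locale Psi_setting =
  fixes \<Omega> :: "(real^'n) set" and p :: real
    and A :: "real^'n \<Rightarrow> real^'n^'n" and bb :: "real^'n \<Rightarrow> real^'n" and c :: "real^'n \<Rightarrow> real"
    and f :: "real \<Rightarrow> real" and Kf :: real and \<phi>1 \<phi>1s :: "real^'n \<Rightarrow> real" and l1 :: real
  assumes open_domain: "open \<Omega>" and bounded_domain: "bounded \<Omega>" and nonempty_domain: "\<Omega> \<noteq> {}"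
    and p_ge_1: "1 \<le> p"
    and phi1_X: "\<phi>1 \<in> Xsp \<Omega> p" and phi1_pos: "\<And>x. x \<in> \<Omega> \<Longrightarrow> 0 < \<phi>1 x"
    and phi1s_measurable: "\<phi>1s \<in> borel_measurable (lebesgue_on \<Omega>)"
    and phi1s_pos: "AE x in lebesgue. x \<in> \<Omega> \<longrightarrow> 0 < \<phi>1s x"
    and phi1s_integrable: "\<And>g. g \<in> Lp \<Omega> p \<Longrightarrow> set_integrable lebesgue \<Omega> (\<lambda>x. g x * \<phi>1s x)"
    and adjoint_eigen: "\<And>v. v \<in> Xsp \<Omega> p \<Longrightarrow> ip \<Omega> (\<lambda>x. Lop \<Omega> A bb c v x + l1 * v x) \<phi>1s = 0"
    and f_lipschitz: "lipschitz_on Kf UNIV f"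
    and Psi_bilipschitz: "bilip_homeo \<Omega> p A bb c f \<phi>1 \<phi>1s"
begin

abbreviation "X \<equiv> Xsp \<Omega> p"
abbreviation "Z \<equiv> Zsp \<Omega> p \<phi>1s"
abbreviation "F \<equiv> Fop \<Omega> A bb c f"
abbreviation "\<Psi> \<equiv> Psi \<Omega> A bb c f \<phi>1 \<phi>1s"
abbreviation "\<Psi>_inv \<equiv> Psi_inv \<Omega> p A bb c f \<phi>1 \<phi>1s"
abbreviation "height \<equiv> htilde \<Omega> p A bb c f \<phi>1 \<phi>1s"
abbreviation "tcoef \<equiv> coef \<Omega> \<phi>1 \<phi>1s"
abbreviation "U z t \<equiv> \<Psi>_inv (\<lambda>x. z x + t * \<phi>1 x)"

lemma domain_sets: "\<Omega> \<in> sets lebesgue"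
  using open_domain by (rule open_imp_sets_lebesgue)

lemma domain_finite: "emeasure lebesgue \<Omega> < \<infinity>"
  using emeasure_bounded_finite[OF bounded_domain] borel_open[OF open_domain] by simp

lemma p_pos: "0 < p"
  using p_ge_1 by simp

lemma phi1_Lp: "\<phi>1 \<in> Lp \<Omega> p"
  using phi1_X Xsp_subset_Lp by blast

lemma Lpnorm_line_diff:
  "Lpnorm \<Omega> p (\<lambda>x. (z x + t * \<phi>1 x) - (z x + s * \<phi>1 x)) = \<bar>t - s\<bar> * Lpnorm \<Omega> p \<phi>1"
proof -
  have "(\<lambda>x. (z x + t * \<phi>1 x) - (z x + s * \<phi>1 x)) = (\<lambda>x. (t - s) * \<phi>1 x)"
    by (simp add: algebra_simps)
  then show ?thesis
    using phi1_Lp domain_sets p_pos by (simp add: Lpnorm_cmult Lp_def)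
qed

lemma phi1s_nonneg: "AE x in lebesgue. x \<in> \<Omega> \<longrightarrow> 0 \<le> \<phi>1s x"
  using phi1s_pos by eventually_elim auto

lemma pairing_phi1_pos: "0 < ip \<Omega> \<phi>1 \<phi>1s"
proof -
  have int: "integrable lebesgue (\<lambda>x. indicator \<Omega> x *\<^sub>R (\<phi>1 x * \<phi>1s x))"
    using phi1s_integrable[OF phi1_Lp] unfolding set_integrable_def .
  have nonneg: "AE x in lebesgue. 0 \<le> indicator \<Omega> x *\<^sub>R (\<phi>1 x * \<phi>1s x)"
    using phi1s_nonneg by eventually_elim (auto simp: indicator_def less_imp_le phi1_pos)
  have "ip \<Omega> \<phi>1 \<phi>1s \<noteq> 0"
  proof
    assume "ip \<Omega> \<phi>1 \<phi>1s = 0"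
    then have "AE x in lebesgue. indicator \<Omega> x *\<^sub>R (\<phi>1 x * \<phi>1s x) = 0"
      using integral_nonneg_eq_0_iff_AE[OF int nonneg] unfolding ip_def set_lebesgue_integral_def by simp
    then have "AE x \<in> \<Omega> in lebesgue. x \<in> {}"
      using phi1s_pos by eventually_elim (auto dest: phi1_pos)
    with nonempty_domain open_domain show False
      using mem_closed_if_AE_lebesgue_open[of \<Omega> "{}"] by blast
  qed
  moreover have "0 \<le> ip \<Omega> \<phi>1 \<phi>1s"
    unfolding ip_def set_lebesgue_integral_def using nonneg by (rule integral_nonneg_AE)
  ultimately show ?thesis by simp
qed

lemma line_Lp: "z \<in> Z \<Longrightarrow> (\<lambda>x. z x + t * \<phi>1 x) \<in> Lp \<Omega> p"
  unfolding Zsp_def using p_pos by (auto intro!: Lp_add Lp_cmult domain_sets phi1_Lp)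

lemma coef_line:
  assumes "z \<in> Z"
  shows "tcoef (\<lambda>x. z x + t * \<phi>1 x) = t"
proof -
  have "ip \<Omega> (\<lambda>x. z x + t * \<phi>1 x) \<phi>1s = ip \<Omega> z \<phi>1s + t * ip \<Omega> \<phi>1 \<phi>1s"
    using assms unfolding Zsp_def
    by (simp add: ip_add ip_cmult phi1s_integrable Lp_cmult domain_sets phi1_Lp)
  then show ?thesis
    using assms pairing_phi1_pos unfolding Zsp_def coef_def by simp
qed

lemma coef_eq_if_ae_eq_line:
  assumes "z \<in> Z" "ae_eq \<Omega> g (\<lambda>x. z x + s * \<phi>1 x)"
  shows "tcoef g = s"
proof -
  have line: "(\<lambda>x. z x + s * \<phi>1 x) \<in> borel_measurable (lebesgue_on \<Omega>)"
    using line_Lp[OF assms(1)] unfolding Lp_def by auto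
  have "AE x in lebesgue. x \<in> \<Omega> \<longrightarrow> z x + s * \<phi>1 x = g x"
    using assms(2) unfolding ae_eq_def by eventually_elim simp
  then have "g \<in> borel_measurable (lebesgue_on \<Omega>)"
    by (rule borel_measurable_restrict_cong_AE[OF domain_sets line])
  then have "ip \<Omega> g \<phi>1s = ip \<Omega> (\<lambda>x. z x + s * \<phi>1 x) \<phi>1s"
    using assms(2) unfolding ae_eq_def
    by (intro ip_cong_AE[OF domain_sets _ line phi1s_measurable])
  then show ?thesis
    using coef_line[OF assms(1)] unfolding coef_def by simp
qed

lemma Psi_lower_bound:
  obtains c0 where "0 < c0"
    "\<And>u v. u \<in> X \<Longrightarrow> v \<in> X \<Longrightarrow>
      c0 * Xnorm \<Omega> p (\<lambda>x. u x - v x) \<le> Lpnorm \<Omega> p (\<lambda>x. \<Psi> u x - \<Psi> v x)"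
  using Psi_bilipschitz unfolding bilip_homeo_def by blast

lemma Psi_ae_injective:
  assumes "u \<in> X" "v \<in> X" "ae_eq \<Omega> (\<Psi> u) (\<Psi> v)"
  shows "u = v"
proof (rule Xsp_eqI[OF open_domain p_pos assms(1,2)])
  obtain c0 where c0: "0 < c0"
    "c0 * Xnorm \<Omega> p (\<lambda>x. u x - v x) \<le> Lpnorm \<Omega> p (\<lambda>x. \<Psi> u x - \<Psi> v x)"
    using Psi_lower_bound assms(1,2) by metis
  have "Lpnorm \<Omega> p (\<lambda>x. \<Psi> u x - \<Psi> v x) = Lpnorm \<Omega> p (\<lambda>x. 0)"
    using assms(3) unfolding ae_eq_def by (intro Lpnorm_cong_AE) (auto elim!: AE_mp)
  with c0 have "Xnorm \<Omega> p (\<lambda>x. u x - v x) \<le> 0"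
    by (simp add: Lpnorm_zero mult_le_0_iff)
  then show "Lpnorm \<Omega> p (\<lambda>x. u x - v x) = 0"
    using Lpnorm_le_Xnorm Lpnorm_nonneg by (metis order.antisym order.trans)
qed

lemma Psi_inv_eqI:
  assumes "u \<in> X" "ae_eq \<Omega> (\<Psi> u) g"
  shows "\<Psi>_inv g = u"
  unfolding Psi_inv_def
proof (rule the_equality)
  fix v assume v: "v \<in> X \<and> ae_eq \<Omega> (\<Psi> v) g"
  have "ae_eq \<Omega> (\<Psi> v) (\<Psi> u)"
    using conjunct2[OF v] assms(2) unfolding ae_eq_def by eventually_elim simp
  with v assms(1) show "v = u" by (blast intro: Psi_ae_injective)
qed (use assms in simp)

lemma Psi_inv:
  assumes "g \<in> Lp \<Omega> p"
  shows "\<Psi>_inv g \<in> X" and "ae_eq \<Omega> (\<Psi> (\<Psi>_inv g)) g"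
proof -
  obtain u where "u \<in> X" "ae_eq \<Omega> (\<Psi> u) g"
    using Psi_bilipschitz assms unfolding bilip_homeo_def by blast
  with Psi_inv_eqI show "\<Psi>_inv g \<in> X" and "ae_eq \<Omega> (\<Psi> (\<Psi>_inv g)) g" by simp_all
qed

lemma Psi_inv_lipschitz:
  obtains K where "0 \<le> K" "\<And>g g'. g \<in> Lp \<Omega> p \<Longrightarrow> g' \<in> Lp \<Omega> p \<Longrightarrow>
    Xnorm \<Omega> p (\<lambda>x. \<Psi>_inv g x - \<Psi>_inv g' x) \<le> K * Lpnorm \<Omega> p (\<lambda>x. g x - g' x)"
proof -
  obtain c0 where c0: "0 < c0"
    "\<And>u v. u \<in> X \<Longrightarrow> v \<in> X \<Longrightarrow>
      c0 * Xnorm \<Omega> p (\<lambda>x. u x - v x) \<le> Lpnorm \<Omega> p (\<lambda>x. \<Psi> u x - \<Psi> v x)"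
    using Psi_lower_bound by blast
  have "Xnorm \<Omega> p (\<lambda>x. \<Psi>_inv g x - \<Psi>_inv g' x) \<le> 1 / c0 * Lpnorm \<Omega> p (\<lambda>x. g x - g' x)"
    if "g \<in> Lp \<Omega> p" "g' \<in> Lp \<Omega> p" for g g'
  proof -
    have "Lpnorm \<Omega> p (\<lambda>x. \<Psi> (\<Psi>_inv g) x - \<Psi> (\<Psi>_inv g') x) = Lpnorm \<Omega> p (\<lambda>x. g x - g' x)"
      using Psi_inv(2)[OF that(1)] Psi_inv(2)[OF that(2)] unfolding ae_eq_def
      by (intro Lpnorm_cong_AE) (auto elim!: AE_mp)
    then show ?thesis
      using c0(1) c0(2)[OF Psi_inv(1)[OF that(1)] Psi_inv(1)[OF that(2)]]
      by (simp add: field_simps)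
  qed
  with c0(1) show ?thesis by (intro that[of "1 / c0"]) simp_all
qed

lemma U_in_X: "z \<in> Z \<Longrightarrow> U z t \<in> X"
  by (rule Psi_inv(1)[OF line_Lp])

lemma coef_U_and_F_U:
  assumes "z \<in> Z"
  shows "tcoef (U z t) = t" and "ae_eq \<Omega> (F (U z t)) (\<lambda>x. z x + height z t * \<phi>1 x)"
proof -
  define u where "u = U z t"
  define s where "s = t - tcoef u + tcoef (F u)"
  have F_u: "ae_eq \<Omega> (F u) (\<lambda>x. z x + s * \<phi>1 x)"
    using Psi_inv(2)[OF line_Lp[OF assms, of t]] unfolding ae_eq_def u_def[symmetric]
    by eventually_elim (simp add: Psi_def Pproj_def s_def algebra_simps)
  then have "tcoef (F u) = s" by (rule coef_eq_if_ae_eq_line[OF assms])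
  then show "tcoef (U z t) = t" using s_def u_def by simp
  show "ae_eq \<Omega> (F (U z t)) (\<lambda>x. z x + height z t * \<phi>1 x)"
    using F_u \<open>tcoef (F u) = s\<close> by (simp add: htilde_def u_def)
qed

lemma f_comp_Lp: "u \<in> Lp \<Omega> p \<Longrightarrow> (\<lambda>x. f (u x)) \<in> Lp \<Omega> p"
  by (rule Lp_lipschitz_comp[OF domain_sets domain_finite less_imp_le[OF p_pos] f_lipschitz])

lemma coef_F:
  assumes "u \<in> X" "F u \<in> Lp \<Omega> p"
  shows "tcoef (F u) = l1 * tcoef u - ip \<Omega> (\<lambda>x. f (u x)) \<phi>1s / ip \<Omega> \<phi>1 \<phi>1s"
proof -
  have u: "u \<in> Lp \<Omega> p" using assms(1) Xsp_subset_Lp by blast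
  have "(\<lambda>x. Lop \<Omega> A bb c u x + l1 * u x) = (\<lambda>x. (l1 * u x - f (u x)) - F u x)"
    by (simp add: Fop_def algebra_simps)
  then have "0 = ip \<Omega> (\<lambda>x. (l1 * u x - f (u x)) - F u x) \<phi>1s"
    using adjoint_eigen[OF assms(1)] by simp
  also have "\<dots> = ip \<Omega> (\<lambda>x. l1 * u x - f (u x)) \<phi>1s - ip \<Omega> (F u) \<phi>1s"
    using u assms(2) domain_sets p_pos
    by (intro ip_diff phi1s_integrable Lp_diff Lp_cmult f_comp_Lp) auto
  also have "ip \<Omega> (\<lambda>x. l1 * u x - f (u x)) \<phi>1s = l1 * ip \<Omega> u \<phi>1s - ip \<Omega> (\<lambda>x. f (u x)) \<phi>1s"
    using u domain_sets ip_diff[OF phi1s_integrable phi1s_integrable, of "\<lambda>x. l1 * u x"]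
    by (simp add: ip_cmult Lp_cmult f_comp_Lp)
  finally show ?thesis
    using pairing_phi1_pos unfolding coef_def by (simp add: field_simps)
qed

lemma height_eq:
  assumes "z \<in> Z"
  shows "height z t = l1 * t - ip \<Omega> (\<lambda>x. f (U z t x)) \<phi>1s / ip \<Omega> \<phi>1 \<phi>1s"
proof -
  have "F (U z t) \<in> Lp \<Omega> p"
    using coef_U_and_F_U(2)[OF assms, of t] unfolding ae_eq_def
    by (intro Lp_cong_AE[OF domain_sets line_Lp[OF assms]]) (auto elim!: AE_mp)
  then show ?thesis
    using coef_F[OF U_in_X[OF assms]] coef_U_and_F_U(1)[OF assms] by (simp add: htilde_def)
qed

lemma pairing_f_lipschitz:
  obtains C where "0 \<le> C" "\<And>u v. u \<in> Lp \<Omega> p \<Longrightarrow> v \<in> Lp \<Omega> p \<Longrightarrow>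
    \<bar>ip \<Omega> (\<lambda>x. f (u x)) \<phi>1s - ip \<Omega> (\<lambda>x. f (v x)) \<phi>1s\<bar> \<le> C * Lpnorm \<Omega> p (\<lambda>x. u x - v x)"
proof -
  obtain C where C: "0 \<le> C"
    "\<And>g. g \<in> Lp \<Omega> p \<Longrightarrow> ip \<Omega> (\<lambda>x. \<bar>g x\<bar>) \<phi>1s \<le> C * Lpnorm \<Omega> p g"
    using Lp_pairing_bounded[OF domain_sets p_ge_1 phi1s_nonneg phi1s_integrable] by blast
  have "\<bar>ip \<Omega> (\<lambda>x. f (u x)) \<phi>1s - ip \<Omega> (\<lambda>x. f (v x)) \<phi>1s\<bar>
      \<le> Kf * C * Lpnorm \<Omega> p (\<lambda>x. u x - v x)"
    if u: "u \<in> Lp \<Omega> p" and v: "v \<in> Lp \<Omega> p" for u v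
  proof -
    have uv: "(\<lambda>x. u x - v x) \<in> Lp \<Omega> p"
      using Lp_diff[OF domain_sets u v] p_pos by simp
    have "\<bar>ip \<Omega> (\<lambda>x. f (u x)) \<phi>1s - ip \<Omega> (\<lambda>x. f (v x)) \<phi>1s\<bar>
        \<le> ip \<Omega> (\<lambda>x. \<bar>f (u x) - f (v x)\<bar>) \<phi>1s"
      using u v domain_sets p_pos
      by (intro abs_ip_diff_le phi1s_integrable phi1s_nonneg f_comp_Lp Lp_abs Lp_diff) auto
    also have "\<dots> \<le> ip \<Omega> (\<lambda>x. Kf * \<bar>u x - v x\<bar>) \<phi>1s"
      using u v uv domain_sets p_pos lipschitz_onD[OF f_lipschitz]
      by (intro ip_mono phi1s_integrable phi1s_nonneg f_comp_Lp Lp_abs Lp_diff Lp_cmult AE_I2)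
        (auto simp: dist_real_def)
    also have "\<dots> \<le> Kf * (C * Lpnorm \<Omega> p (\<lambda>x. u x - v x))"
      unfolding ip_cmult using C(2)[OF uv] lipschitz_on_nonneg[OF f_lipschitz]
      by (rule mult_left_mono)
    finally show ?thesis by (simp add: mult.assoc)
  qed
  with C(1) lipschitz_on_nonneg[OF f_lipschitz] show ?thesis
    by (intro that[of "Kf * C"]) auto
qed

lemma U_lipschitz: "\<exists>K. \<forall>z\<in>Z. \<forall>t s. Xnorm \<Omega> p (\<lambda>x. U z t x - U z s x) \<le> K * \<bar>t - s\<bar>"
proof -
  obtain K where K: "0 \<le> K" "\<And>g g'. g \<in> Lp \<Omega> p \<Longrightarrow> g' \<in> Lp \<Omega> p \<Longrightarrow>
    Xnorm \<Omega> p (\<lambda>x. \<Psi>_inv g x - \<Psi>_inv g' x) \<le> K * Lpnorm \<Omega> p (\<lambda>x. g x - g' x)"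
    using Psi_inv_lipschitz by blast
  have "Xnorm \<Omega> p (\<lambda>x. U z t x - U z s x) \<le> K * Lpnorm \<Omega> p \<phi>1 * \<bar>t - s\<bar>"
    if "z \<in> Z" for z t s
    using K(2)[OF line_Lp[OF that] line_Lp[OF that], of t s] unfolding Lpnorm_line_diff by (simp add: mult_ac)
  then show ?thesis by blast
qed

lemma height_lipschitz_along_lines:
  obtains M where "0 \<le> M" "\<And>z z' t t'. z \<in> Z \<Longrightarrow> z' \<in> Z \<Longrightarrow> \<bar>height z t - height z' t'\<bar>
    \<le> \<bar>l1\<bar> * \<bar>t - t'\<bar> + M * Lpnorm \<Omega> p (\<lambda>x. (z x + t * \<phi>1 x) - (z' x + t' * \<phi>1 x))"
proof -
  obtain K where K: "0 \<le> K" "\<And>g g'. g \<in> Lp \<Omega> p \<Longrightarrow> g' \<in> Lp \<Omega> p \<Longrightarrow>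
    Xnorm \<Omega> p (\<lambda>x. \<Psi>_inv g x - \<Psi>_inv g' x) \<le> K * Lpnorm \<Omega> p (\<lambda>x. g x - g' x)"
    using Psi_inv_lipschitz by blast
  obtain C where C: "0 \<le> C" "\<And>u v. u \<in> Lp \<Omega> p \<Longrightarrow> v \<in> Lp \<Omega> p \<Longrightarrow>
    \<bar>ip \<Omega> (\<lambda>x. f (u x)) \<phi>1s - ip \<Omega> (\<lambda>x. f (v x)) \<phi>1s\<bar> \<le> C * Lpnorm \<Omega> p (\<lambda>x. u x - v x)"
    using pairing_f_lipschitz by blast
  define D where "D = ip \<Omega> \<phi>1 \<phi>1s"
  have D: "0 < D" unfolding D_def by (rule pairing_phi1_pos)
  have "\<bar>height z t - height z' t'\<bar>
    \<le> \<bar>l1\<bar> * \<bar>t - t'\<bar> + C * K / D * Lpnorm \<Omega> p (\<lambda>x. (z x + t * \<phi>1 x) - (z' x + t' * \<phi>1 x))"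
    if z: "z \<in> Z" and z': "z' \<in> Z" for z z' t t'
  proof -
    define I where "I = ip \<Omega> (\<lambda>x. f (U z t x)) \<phi>1s"
    define I' where "I' = ip \<Omega> (\<lambda>x. f (U z' t' x)) \<phi>1s"
    define Lq where "Lq = Lpnorm \<Omega> p (\<lambda>x. (z x + t * \<phi>1 x) - (z' x + t' * \<phi>1 x))"
    have U: "U z t \<in> Lp \<Omega> p" "U z' t' \<in> Lp \<Omega> p"
      using U_in_X z z' Xsp_subset_Lp by blast+
    have "\<bar>I - I'\<bar> \<le> C * Lpnorm \<Omega> p (\<lambda>x. U z t x - U z' t' x)"
      unfolding I_def I'_def by (rule C(2)[OF U])
    also have "\<dots> \<le> C * (K * Lq)"
    proof (rule mult_left_mono[OF _ C(1)])
      show "Lpnorm \<Omega> p (\<lambda>x. U z t x - U z' t' x) \<le> K * Lq"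
        unfolding Lq_def using Lpnorm_le_Xnorm K(2)[OF line_Lp[OF z] line_Lp[OF z']]
        by (rule order.trans)
    qed
    finally have I_diff: "\<bar>I - I'\<bar> / D \<le> C * K / D * Lq"
      using D by (simp add: divide_right_mono)
    have "height z t - height z' t' = l1 * (t - t') - (I - I') / D"
      unfolding height_eq[OF z] height_eq[OF z'] I_def I'_def D_def
      by (simp add: algebra_simps diff_divide_distrib)
    then have "\<bar>height z t - height z' t'\<bar> \<le> \<bar>l1 * (t - t')\<bar> + \<bar>(I - I') / D\<bar>"
      by (simp only: abs_triangle_ineq4)
    also have "\<dots> = \<bar>l1\<bar> * \<bar>t - t'\<bar> + \<bar>I - I'\<bar> / D"
      using D by (simp add: abs_mult)
    finally show ?thesis
      using I_diff unfolding Lq_def by linarith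
  qed
  with C(1) K(1) D show ?thesis by (intro that[of "C * K / D"]) auto
qed

lemma height_lipschitz:
  "\<exists>K. \<forall>z\<in>Z. \<forall>z'\<in>Z. \<forall>t t'.
     \<bar>height z t - height z' t'\<bar> \<le> K * (Lpnorm \<Omega> p (\<lambda>x. z x - z' x) + \<bar>t - t'\<bar>)"
proof -
  obtain M where M: "0 \<le> M" "\<And>z z' t t'. z \<in> Z \<Longrightarrow> z' \<in> Z \<Longrightarrow> \<bar>height z t - height z' t'\<bar>
    \<le> \<bar>l1\<bar> * \<bar>t - t'\<bar> + M * Lpnorm \<Omega> p (\<lambda>x. (z x + t * \<phi>1 x) - (z' x + t' * \<phi>1 x))"
    using height_lipschitz_along_lines by blast
  define K where "K = \<bar>l1\<bar> + M + M * Lpnorm \<Omega> p \<phi>1"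
  have "\<bar>height z t - height z' t'\<bar> \<le> K * (Lpnorm \<Omega> p (\<lambda>x. z x - z' x) + \<bar>t - t'\<bar>)"
    if z: "z \<in> Z" and z': "z' \<in> Z" for z z' t t'
  proof -
    have "\<bar>height z t - height z' t\<bar> \<le> M * Lpnorm \<Omega> p (\<lambda>x. z x - z' x)"
      using M(2)[OF z z', of t t] by simp
    moreover have "\<bar>height z' t - height z' t'\<bar> \<le> (\<bar>l1\<bar> + M * Lpnorm \<Omega> p \<phi>1) * \<bar>t - t'\<bar>"
      using M(2)[OF z' z', of t t'] unfolding Lpnorm_line_diff by (simp add: algebra_simps)
    moreover have "M * Lpnorm \<Omega> p (\<lambda>x. z x - z' x) \<le> K * Lpnorm \<Omega> p (\<lambda>x. z x - z' x)"
      and "(\<bar>l1\<bar> + M * Lpnorm \<Omega> p \<phi>1) * \<bar>t - t'\<bar> \<le> K * \<bar>t - t'\<bar>"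
      unfolding K_def using M(1) Lpnorm_nonneg[of \<Omega> p \<phi>1]
      by (intro mult_right_mono Lpnorm_nonneg; simp)+
    ultimately show ?thesis by (simp add: distrib_left)
  qed
  then show ?thesis by blast
qed

lemma solutions_bij:
  assumes "z \<in> Z"
  shows "bij_betw tcoef {u \<in> X. ae_eq \<Omega> (F u) (\<lambda>x. z x + s * \<phi>1 x)} {t. height z t = s}"
proof -
  have solution: "U z (tcoef u) = u \<and> height z (tcoef u) = s"
    if u: "u \<in> X" and Fu: "ae_eq \<Omega> (F u) (\<lambda>x. z x + s * \<phi>1 x)" for u
  proof -
    have coef_Fu: "tcoef (F u) = s" by (rule coef_eq_if_ae_eq_line[OF assms Fu])
    have "ae_eq \<Omega> (\<Psi> u) (\<lambda>x. z x + tcoef u * \<phi>1 x)"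
      using Fu unfolding ae_eq_def by eventually_elim (simp add: Psi_def Pproj_def coef_Fu)
    then have "U z (tcoef u) = u" by (rule Psi_inv_eqI[OF u])
    with coef_Fu show ?thesis by (simp add: htilde_def)
  qed
  let ?S = "{u \<in> X. ae_eq \<Omega> (F u) (\<lambda>x. z x + s * \<phi>1 x)}"
  show ?thesis
  proof (rule bij_betw_imageI)
    show "inj_on tcoef ?S"
    proof (rule inj_onI)
      fix u v assume u: "u \<in> ?S" and v: "v \<in> ?S" and "tcoef u = tcoef v"
      have "u = U z (tcoef u)" using solution[of u] u by simp
      also have "\<dots> = U z (tcoef v)" using \<open>tcoef u = tcoef v\<close> by simp
      also have "\<dots> = v" using solution[of v] v by simp
      finally show "u = v" .
    qed
    show "tcoef ` ?S = {t. height z t = s}"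
    proof (intro equalityI subsetI)
      fix t assume "t \<in> tcoef ` ?S"
      then obtain u where "u \<in> ?S" "t = tcoef u" by blast
      then show "t \<in> {t. height z t = s}" using solution[of u] by simp
    next
      fix t assume "t \<in> {t. height z t = s}"
      then have "U z t \<in> ?S"
        using U_in_X[OF assms] coef_U_and_F_U(2)[OF assms, of t] by simp
      then show "t \<in> tcoef ` ?S"
        using coef_U_and_F_U(1)[OF assms, of t] by (intro image_eqI[where f = tcoef]) simp_all
    qed
  qed
qed

end

lemma lipschitz_on_UNIV_realI:
  fixes f :: "real \<Rightarrow> real"
  assumes "\<And>x y. \<bar>f x - f y\<bar> \<le> K * \<bar>x - y\<bar>"
  shows "lipschitz_on (max K 0) UNIV f"
proof (rule lipschitz_onI)
  show "dist (f x) (f y) \<le> max K 0 * dist x y" for x y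
    using assms[of x y] mult_right_mono[OF max.cobounded1[of K 0], of "\<bar>x - y\<bar>"]
    by (simp add: dist_real_def)
qed simp

text \<open>The hypotheses on the coefficients and on the boundary enter only through \<open>B_prop\<close>,
  which makes \<open>\<Psi>\<close> a bi-Lipschitz homeomorphism.\<close>
theorem proposition2p11:
  fixes \<Omega> :: "(real^'n) set"
    and A :: "real^'n \<Rightarrow> real^'n^'n" and bb :: "real^'n \<Rightarrow> real^'n" and c :: "real^'n \<Rightarrow> real"
    and lam Lam p b B :: real and f :: "real \<Rightarrow> real"
    and \<phi>1 \<phi>1s :: "real^'n \<Rightarrow> real"
  assumes dom: "C11_domain \<Omega>"
    and ell: "0 < lam" "lam \<le> Lam"
    and A_cont: "continuous_on (closure \<Omega>) A"
    and A_sym: "\<forall>x\<in>closure \<Omega>. transpose (A x) = A x"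
    and A_eig: "\<forall>x\<in>closure \<Omega>. \<forall>\<mu> v. v \<noteq> 0 \<and> A x *v v = \<mu> *\<^sub>R v \<longrightarrow> lam \<le> \<mu> \<and> \<mu> \<le> Lam"
    and bb_meas: "bb \<in> borel_measurable (lebesgue_on \<Omega>)"
    and bb_bd: "\<forall>x\<in>\<Omega>. norm (bb x) \<le> Lam"
    and c_meas: "c \<in> borel_measurable (lebesgue_on \<Omega>)"
    and c_bd: "\<forall>x\<in>\<Omega>. \<bar>c x\<bar> \<le> Lam"
    and p_ge: "p \<ge> real CARD('n)"
    and phi1: "\<phi>1 \<in> Xsp \<Omega> p" "\<forall>x\<in>\<Omega>. \<phi>1 x > 0"
      "ae_eq \<Omega> (\<lambda>x. - Lop \<Omega> A bb c \<phi>1 x) (\<lambda>x. lambda1 \<Omega> A bb c * \<phi>1 x)"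
    and phi1s: "\<phi>1s \<in> borel_measurable (lebesgue_on \<Omega>)"
      "AE x in lebesgue. x \<in> \<Omega> \<longrightarrow> \<phi>1s x > 0"
      "\<forall>g\<in>Lp \<Omega> p. set_integrable lebesgue \<Omega> (\<lambda>x. g x * \<phi>1s x)"
      "\<forall>v\<in>Xsp \<Omega> p. ip \<Omega> (\<lambda>x. Lop \<Omega> A bb c v x + lambda1 \<Omega> A bb c * v x) \<phi>1s = 0"
    and lam1_pos: "0 < lambda1 \<Omega> A bb c"
    and B_gt: "lambda1 \<Omega> A bb c < B"
    and B_prop: "\<forall>b' f'. lambda1 \<Omega> A bb c < b' \<and> b' < B \<and> AP f' b' \<longrightarrow>
                   bilip_homeo \<Omega> p A bb c f' \<phi>1 \<phi>1s"
    and f_lip: "\<exists>K. \<forall>x y. \<bar>f x - f y\<bar> \<le> K * \<bar>x - y\<bar>"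
    and f_AP: "AP f b"
    and b_range: "lambda1 \<Omega> A bb c < b" "b < B"
  shows
    "(\<exists>K. \<forall>z\<in>Zsp \<Omega> p \<phi>1s. \<forall>t s.
        Xnorm \<Omega> p (\<lambda>x. Psi_inv \<Omega> p A bb c f \<phi>1 \<phi>1s (\<lambda>y. z y + t * \<phi>1 y) x
                      - Psi_inv \<Omega> p A bb c f \<phi>1 \<phi>1s (\<lambda>y. z y + s * \<phi>1 y) x)
          \<le> K * \<bar>t - s\<bar>)
     \<and> (\<exists>K. \<forall>z\<in>Zsp \<Omega> p \<phi>1s. \<forall>z'\<in>Zsp \<Omega> p \<phi>1s. \<forall>t t'.
        \<bar>htilde \<Omega> p A bb c f \<phi>1 \<phi>1s z t - htilde \<Omega> p A bb c f \<phi>1 \<phi>1s z' t'\<bar>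
          \<le> K * (Lpnorm \<Omega> p (\<lambda>x. z x - z' x) + \<bar>t - t'\<bar>))
     \<and> (\<forall>zg\<in>Zsp \<Omega> p \<phi>1s. \<forall>tg.
        \<exists>h. bij_betw h
          {u \<in> Xsp \<Omega> p. ae_eq \<Omega> (Fop \<Omega> A bb c f u) (\<lambda>x. zg x + tg * \<phi>1 x)}
          {t. htilde \<Omega> p A bb c f \<phi>1 \<phi>1s zg t = tg})"
proof -
  obtain K where "\<forall>x y. \<bar>f x - f y\<bar> \<le> K * \<bar>x - y\<bar>" using f_lip by blast
  then have f_lipschitz: "lipschitz_on (max K 0) UNIV f"
    by (intro lipschitz_on_UNIV_realI) blast
  have "1 \<le> real CARD('n)" by simp
  interpret Psi_setting \<Omega> p A bb c f "max K 0" \<phi>1 \<phi>1s "lambda1 \<Omega> A bb c"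
  proof
    show "open \<Omega>" "bounded \<Omega>" "\<Omega> \<noteq> {}" using dom unfolding C11_domain_def by simp_all
    show "1 \<le> p" using p_ge \<open>1 \<le> real CARD('n)\<close> by linarith
    show "bilip_homeo \<Omega> p A bb c f \<phi>1 \<phi>1s" using B_prop f_AP b_range by blast
  qed (use phi1 phi1s f_lipschitz in auto)
  show ?thesis using U_lipschitz height_lipschitz solutions_bij by blast
qed

end
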